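(* In the setting of the context, assume (G1), (G2), (G3). Let $M:=(2c_D^2c^2c_1^2)\vee(3cc_2)$, let $k\in\mathbb N$ be such that $M\le M_0^k$ and $\alpha_0^k<1/4$, put $\alpha_M:=\alpha_0^k$, and let $0<\alpha\le\alpha_M$. Let $\eta:=(2c_Dc^3c_1^2c_2)^{-1}$. Then for every $x_0\in X_0$ and $0<r<R_0(x_0)$, every $x\in U(x_0,\alpha r)$ and every closed set $A\subseteq U(x_0,\alpha r)$, $$\varepsilon_x^{A\cup (X\setminus U(x_0,r))}(A)\ \ge\ \eta\,\frac{\operatorname{cap}A}{\operatorname{cap}U(x_0,\alpha r)}.$$
   Context: $(X,\rho)$ is a separable metric space, $X_0\subseteq X$ open; $\mathcal M(X)$ the finite Borel measures (extended to universally measurable sets), $\|\mu\|:=\mu(X)$, $\varepsilon_x$ the Dirac measure. For every open $U\subseteq X$ and $x\in X$ a measure $\mu_x^U\in\mathcal M(X)$ is given such that for all open $U,V$ and all $x$: $\mu_x^U(U)=0$, $\|\mu_x^U\|\le1$, $\mu_x^U=\varepsilon_x$ if $x\notin U$; $y\mapsto\mu_y^U(E)$ is universally measurable for Borel $E$; $\mu_x^U=\int\mu_y^U\,d\mu_x^V(y)$ if $V\subseteq U$. For closed $A$, $\varepsilon_x^A:=\mu_x^{X\setminus A}$. $\mathcal U(X_0)$: open $U$ with $\overline U\subseteq X_0$; $U(x,r)$ open ball; $R_0(x):=\sup\{r>0:\overline{U(x,r)}\subseteq X_0\}$. $G\colon X\times X\to(0,\infty]$ Borel, $G\mu(x):=\int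 G(x,y)d\mu(y)$, $\operatorname{cap}A:=\sup\{\|\mu\|:\mu\in\mathcal M(X),\ \mu(X\setminus A)=0,\ G\mu\le1\}$. (G1): there is $c_1\ge1$ such that for all $U\in\mathcal U(X_0)$, $x\in U$, $\delta>0$, closed $A\subseteq U$ there are a closed neighborhood $B\subseteq U$ of $A$ and a measure $\nu$ carried by $B$ with $\|\varepsilon_x^B\|-\delta<c_1\|\varepsilon_x^A\|$ and $\|\varepsilon_y^A\|\le G\nu(y)\le c_1\|\varepsilon_y^B\|$ for all $y$. (G2): there are a strictly decreasing continuous $g\colon[0,\infty)\to(0,\infty]$ and $c,c_D,M_0\in[1,\infty)$, $\alpha_0\in(0,1)$ with $g(r/2)\le c_Dg(r)$, $M_0g(r)\le g(\alpha_0r)$ for all $r>0$ and $c^{-1}g\circ\rho\le G\le c\,g\circ\rho$. (G3): there is $c_2\ge1$ with $\operatorname{cap}U(x,r)\ge c_2^{-1}g(r)^{-1}$ for all $x\in X_0$, $0<r<R_0(x)$. *)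

theory Defs
  imports "HOL-Probability.Probability"
begin

definition finite_borel :: "'a::topological_space measure \<Rightarrow> bool" where
  "finite_borel \<mu> \<longleftrightarrow> sets \<mu> = sets borel \<and> finite_measure \<mu>"

definition univ_meas_fun :: "('a::topological_space \<Rightarrow> ennreal) \<Rightarrow> bool" where
  "univ_meas_fun f \<longleftrightarrow>
     (\<forall>\<nu>. finite_borel \<nu> \<longrightarrow> f \<in> borel_measurable (completion \<nu>))"

definition kernel_family :: "('a::topological_space set \<Rightarrow> 'a \<Rightarrow> 'a measure) \<Rightarrow> bool" where
  "kernel_family mu \<longleftrightarrow>
     (\<forall>U x. open U \<longrightarrow>
        finite_borel (mu U x) \<and> emeasure (mu U x) U = 0 \<and> emeasure (mu U x) UNIV \<le> 1 \<and>
        (x \<notin> U \<longrightarrow> mu U x = return borel x)) \<and>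
     (\<forall>U E. open U \<and> E \<in> sets borel \<longrightarrow> univ_meas_fun (\<lambda>y. emeasure (mu U y) E)) \<and>
     (\<forall>U V x. open U \<and> open V \<and> V \<subseteq> U \<longrightarrow>
        (\<forall>E\<in>sets borel. emeasure (mu U x) E =
            (\<integral>\<^sup>+ y. emeasure (mu U y) E \<partial>(completion (mu V x)))))"

definition sweep :: "('a set \<Rightarrow> 'a \<Rightarrow> 'a measure) \<Rightarrow> 'a set \<Rightarrow> 'a \<Rightarrow> 'a measure" where
  "sweep mu A x = mu (- A) x"

definition Gpot :: "('a \<Rightarrow> 'a \<Rightarrow> ennreal) \<Rightarrow> 'a measure \<Rightarrow> 'a \<Rightarrow> ennreal" where
  "Gpot G \<mu> x = (\<integral>\<^sup>+ y. G x y \<partial>\<mu>)"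

definition cap :: "('a::topological_space \<Rightarrow> 'a \<Rightarrow> ennreal) \<Rightarrow> 'a set \<Rightarrow> ennreal" where
  "cap G A = (SUP \<mu> \<in> {\<mu>. finite_borel \<mu> \<and> emeasure \<mu> (- A) = 0 \<and> (\<forall>x. Gpot G \<mu> x \<le> 1)}.
                 emeasure \<mu> UNIV)"

definition R0 :: "'a::metric_space set \<Rightarrow> 'a \<Rightarrow> ereal" where
  "R0 X0 x = Sup (ereal ` {r. 0 < r \<and> closure (ball x r) \<subseteq> X0})"

end

theory Submission
  imports Defs
begin

(* Fix e > 0 and take B \<supseteq> A and \<nu> from (G1) inside the ball U(x0,\<rho>), \<rho> = \<alpha> r.
   Since \<epsilon>_y^A is the Dirac measure for y \<in> A, G\<nu> \<ge> 1 on A, so by Fubini and the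
   quasi-symmetry of G we get cap A \<le> c\<^sup>2 \<parallel>\<nu>\<parallel>, while (G3) gives cap U(x0,\<rho>) \<ge> 1 / (c2 g(\<rho>)).
   It remains to bound g(\<rho>) \<parallel>\<nu>\<parallel> by \<epsilon>_x^A'(A) with A' = A \<union> \<complement>U(x0,r).  At x,
   g(2\<rho>) \<parallel>\<nu>\<parallel> / c \<le> G\<nu>(x) \<le> c1 \<parallel>\<epsilon>_x^B\<parallel> \<le> c1 (c1 \<parallel>\<epsilon>_x^A\<parallel> + e).  Sweeping first onto A'
   splits \<parallel>\<epsilon>_x^A\<parallel> into \<epsilon>_x^A'(A) and the mass of points y outside U(x0,r), where
   \<parallel>\<epsilon>_y^A\<parallel> \<le> G\<nu>(y) \<le> c g(r/2) \<parallel>\<nu>\<parallel>.  The choice of k makes this last term at most half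
   of g(\<rho>) \<parallel>\<nu>\<parallel> up to the constants, so it is absorbed; finally let e \<rightarrow> 0. *)

lemma finite_borel_sets: "finite_borel \<mu> \<Longrightarrow> sets \<mu> = sets borel"
  by (simp add: finite_borel_def)

lemma finite_borel_space: "finite_borel \<mu> \<Longrightarrow> space \<mu> = UNIV"
  using sets_eq_imp_space_eq[of \<mu> borel] by (simp add: finite_borel_def)

lemma AE_in_closed_carrier:
  assumes "finite_borel \<mu>" "closed B" "emeasure \<mu> (- B) = 0"
  shows "AE z in \<mu>. z \<in> B"
  by (rule AE_I'[of "- B"])
     (use assms finite_borel_sets[OF assms(1)] in \<open>auto simp: null_sets_def open_Compl borel_open\<close>)

lemma Gpot_ge_mass:
  assumes "finite_borel \<nu>" "closed B" "emeasure \<nu> (- B) = 0" "\<And>z. z \<in> B \<Longrightarrow> L \<le> G x z"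
  shows "L * emeasure \<nu> UNIV \<le> Gpot G \<nu> x"
proof -
  have "L * emeasure \<nu> UNIV = (\<integral>\<^sup>+ z. L \<partial>\<nu>)"
    using finite_borel_space[OF assms(1)] by simp
  also have "\<dots> \<le> Gpot G \<nu> x"
    unfolding Gpot_def using AE_in_closed_carrier[OF assms(1-3)] assms(4)
    by (intro nn_integral_mono_AE) auto
  finally show ?thesis .
qed

lemma Gpot_le_mass:
  assumes "finite_borel \<nu>" "closed B" "emeasure \<nu> (- B) = 0" "\<And>z. z \<in> B \<Longrightarrow> G x z \<le> L"
  shows "Gpot G \<nu> x \<le> L * emeasure \<nu> UNIV"
proof -
  have "Gpot G \<nu> x \<le> (\<integral>\<^sup>+ z. L \<partial>\<nu>)"
    unfolding Gpot_def using AE_in_closed_carrier[OF assms(1-3)] assms(4)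
    by (intro nn_integral_mono_AE) auto
  also have "\<dots> = L * emeasure \<nu> UNIV"
    using finite_borel_space[OF assms(1)] by simp
  finally show ?thesis .
qed

lemma cap_le_mass_if_Gpot_ge_1:
  fixes G :: "'a::second_countable_topology \<Rightarrow> 'a \<Rightarrow> ennreal"
  assumes G_borel: "case_prod G \<in> borel_measurable borel"
    and G_quasi_sym: "\<And>x y. G x y \<le> C * G y x"
    and \<nu>: "finite_borel \<nu>" and A: "closed A" and Gpot_ge_1: "\<And>y. y \<in> A \<Longrightarrow> 1 \<le> Gpot G \<nu> y"
  shows "cap G A \<le> C * emeasure \<nu> UNIV"
  unfolding cap_def
proof (rule SUP_least, clarify)
  fix \<mu> assume \<mu>: "finite_borel \<mu>" "emeasure \<mu> (- A) = 0" "\<forall>x. Gpot G \<mu> x \<le> 1"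
  interpret pair_sigma_finite \<mu> \<nu>
    using \<mu>(1) \<nu> by (simp add: pair_sigma_finite_def finite_borel_def finite_measure_def)
  have G_borel': "case_prod G \<in> borel_measurable (borel \<Otimes>\<^sub>M borel)"
    using G_borel by (simp add: borel_prod)
  have sets_eq: "sets (\<mu> \<Otimes>\<^sub>M \<nu>) = sets (borel \<Otimes>\<^sub>M borel)"
    using finite_borel_sets[OF \<mu>(1)] finite_borel_sets[OF \<nu>] by (intro sets_pair_measure_cong)
  have "(\<lambda>(y, z). C * G z y) \<in> borel_measurable (\<mu> \<Otimes>\<^sub>M \<nu>)"
    unfolding measurable_cong_sets[OF sets_eq refl] using G_borel' by measurable
  have "emeasure \<mu> UNIV = (\<integral>\<^sup>+ y. 1 \<partial>\<mu>)"
    using finite_borel_space[OF \<mu>(1)] by simp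
  also have "\<dots> \<le> (\<integral>\<^sup>+ y. Gpot G \<nu> y \<partial>\<mu>)"
    using AE_in_closed_carrier[OF \<mu>(1) A \<mu>(2)] Gpot_ge_1
    by (intro nn_integral_mono_AE) auto
  also have "\<dots> \<le> (\<integral>\<^sup>+ y. (\<integral>\<^sup>+ z. C * G z y \<partial>\<nu>) \<partial>\<mu>)"
    unfolding Gpot_def using G_quasi_sym by (intro nn_integral_mono) auto
  also have "\<dots> = (\<integral>\<^sup>+ z. (\<integral>\<^sup>+ y. C * G z y \<partial>\<mu>) \<partial>\<nu>)"
    using Fubini' \<open>(\<lambda>(y, z). C * G z y) \<in> borel_measurable (\<mu> \<Otimes>\<^sub>M \<nu>)\<close> by simp
  also have "\<dots> = (\<integral>\<^sup>+ z. C * Gpot G \<mu> z \<partial>\<nu>)"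
    unfolding Gpot_def
  proof (intro nn_integral_cong nn_integral_cmult)
    fix z show "G z \<in> borel_measurable \<mu>"
      unfolding measurable_cong_sets[OF finite_borel_sets[OF \<mu>(1)] refl]
      using measurable_Pair2[OF G_borel', of z] by simp
  qed
  also have "\<dots> \<le> (\<integral>\<^sup>+ z. C \<partial>\<nu>)"
    using \<mu>(3) by (intro nn_integral_mono) (metis mult.right_neutral mult_left_mono zero_le)
  also have "\<dots> = C * emeasure \<nu> UNIV"
    using finite_borel_space[OF \<nu>] by simp
  finally show "emeasure \<mu> UNIV \<le> C * emeasure \<nu> UNIV" .
qed

lemma kernel_family_measure:
  assumes "kernel_family mu" "open U"
  shows "finite_borel (mu U x)" "emeasure (mu U x) UNIV \<le> 1"
    and "emeasure (mu U x) U = 0" and "x \<notin> U \<Longrightarrow> mu U x = return borel x"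
  using conjunct1[OF assms(1)[unfolded kernel_family_def]] assms(2) by auto

lemma kernel_family_compose:
  assumes "kernel_family mu" "open U" "open V" "V \<subseteq> U" "E \<in> sets borel"
  shows "emeasure (mu U x) E = (\<integral>\<^sup>+ y. emeasure (mu U y) E \<partial>mu V x)"
proof -
  have "emeasure (mu U x) E = (\<integral>\<^sup>+ y. emeasure (mu U y) E \<partial>completion (mu V x))"
    using conjunct2[OF conjunct2[OF assms(1)[unfolded kernel_family_def]]] assms(2-5) by blast
  then show ?thesis
    by (simp only: nn_integral_completion)
qed

lemma sweep_finite_borel: "kernel_family mu \<Longrightarrow> closed A \<Longrightarrow> finite_borel (sweep mu A x)"
  unfolding sweep_def by (rule kernel_family_measure) auto

lemma emeasure_sweep_le_1: "kernel_family mu \<Longrightarrow> closed A \<Longrightarrow> emeasure (sweep mu A x) UNIV \<le> 1"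
  unfolding sweep_def by (rule kernel_family_measure) auto

lemma emeasure_sweep_Compl: "kernel_family mu \<Longrightarrow> closed A \<Longrightarrow> emeasure (sweep mu A x) (- A) = 0"
  unfolding sweep_def by (rule kernel_family_measure) auto

lemma sweep_eq_return: "kernel_family mu \<Longrightarrow> closed A \<Longrightarrow> x \<in> A \<Longrightarrow> sweep mu A x = return borel x"
  unfolding sweep_def by (rule kernel_family_measure) auto

lemma emeasure_sweep_eq_measure:
  "kernel_family mu \<Longrightarrow> closed A \<Longrightarrow> emeasure (sweep mu A x) E = ennreal (measure (sweep mu A x) E)"
  using sweep_finite_borel finite_measure.emeasure_eq_measure unfolding finite_borel_def by blast

lemma emeasure_sweep_compose:
  assumes "kernel_family mu" "closed A" "closed A'" "A \<subseteq> A'" "E \<in> sets borel"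
  shows "emeasure (sweep mu A x) E = (\<integral>\<^sup>+ y. emeasure (sweep mu A y) E \<partial>sweep mu A' x)"
  unfolding sweep_def using assms by (intro kernel_family_compose) auto

lemma emeasure_sweep_le_sweep_superset:
  assumes kernel: "kernel_family mu" and A: "closed A" "closed A'" "A \<subseteq> A'"
    and far: "\<And>y. y \<in> A' - A \<Longrightarrow> emeasure (sweep mu A y) UNIV \<le> K"
  shows "emeasure (sweep mu A x) UNIV \<le> emeasure (sweep mu A' x) A + K"
proof -
  \<comment> \<open>first-exit decomposition: \<open>\<epsilon>_x^A = \<integral> \<epsilon>_y^A d\<epsilon>_x^A'\<close>, and \<open>\<epsilon>_y^A\<close> is the Dirac measure on \<open>A\<close>\<close>
  let ?m = "sweep mu A' x"
  have m: "finite_borel ?m" "emeasure ?m (- A') = 0"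
    using kernel A by (auto intro: sweep_finite_borel emeasure_sweep_Compl)
  have "AE y in ?m. emeasure (sweep mu A y) UNIV \<le> indicator A y + K"
    using AE_in_closed_carrier[OF m(1) A(2) m(2)]
    by eventually_elim (use far sweep_eq_return[OF kernel A(1)] in \<open>auto split: split_indicator\<close>)
  then have "emeasure (sweep mu A x) UNIV \<le> (\<integral>\<^sup>+ y. indicator A y + K \<partial>?m)"
    by (subst emeasure_sweep_compose[OF kernel A]) (auto intro: nn_integral_mono_AE)
  also have "\<dots> = emeasure ?m A + K * emeasure ?m UNIV"
    using A finite_borel_sets[OF m(1)] finite_borel_space[OF m(1)]
    by (subst nn_integral_add) (auto simp: borel_closed measurable_cong_sets[OF finite_borel_sets[OF m(1)] refl])
  also have "\<dots> \<le> emeasure ?m A + K"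
    using mult_left_mono[OF emeasure_sweep_le_1[OF kernel A(2)], of K] by (simp add: add_left_mono)
  finally show ?thesis .
qed

lemma absorb_half_bound:
  fixes P K c1 eA eB \<epsilon> h e :: real
  assumes "P \<le> K * eB" "eB \<le> c1 * eA + e" "eA \<le> \<epsilon> + h" "K * c1 * h \<le> P / 2"
    and "0 \<le> K" "1 \<le> c1" "0 \<le> e"
  shows "P \<le> 2 * K * c1 * (\<epsilon> + e)"
proof -
  have "P \<le> K * (c1 * (\<epsilon> + h) + e)"
    using assms(1-3,5,6) by (smt (verit) mult_left_mono)
  also have "\<dots> = K * c1 * \<epsilon> + K * c1 * h + K * e"
    by (simp add: algebra_simps)
  finally have "P \<le> 2 * (K * c1 * \<epsilon> + K * e)"
    using assms(4) by (simp add: distrib_left)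
  also have "\<dots> \<le> 2 * K * c1 * (\<epsilon> + e)"
    using assms(5-7) mult_left_mono[of 1 c1 "K * e"] by (simp add: algebra_simps)
  finally show ?thesis .
qed

lemma ennreal_divide_le_mult:
  assumes "a \<le> ennreal p" "ennreal (1 / q) \<le> b" "0 \<le> p" "0 < q"
  shows "a / b \<le> ennreal (p * q)"
proof (rule divide_le_posI_ennreal)
  show "0 < b"
    using assms(2,4) by (auto intro: less_le_trans[rotated])
  have "ennreal p = ennreal (1 / q) * ennreal (p * q)"
    using assms(3,4) by (simp add: ennreal_mult[symmetric])
  also have "\<dots> \<le> b * ennreal (p * q)"
    using assms(2) by (rule mult_right_mono) simp
  finally show "a \<le> b * ennreal (p * q)"
    using assms(1) by order
qed

lemma closure_ball_subset_if_less_R0: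
  assumes "ereal r < R0 X0 x0" "\<rho> \<le> r"
  shows "closure (ball x0 \<rho>) \<subseteq> X0"
proof -
  obtain r' where r': "closure (ball x0 r') \<subseteq> X0" "r < r'"
    using assms(1) unfolding R0_def by (auto simp: less_Sup_iff)
  then have "closure (ball x0 \<rho>) \<subseteq> closure (ball x0 r')"
    using assms(2) by (intro closure_mono) auto
  then show ?thesis
    using r' by blast
qed

locale green_setting =
  fixes mu :: "'a::{metric_space,second_countable_topology} set \<Rightarrow> 'a \<Rightarrow> 'a measure"
    and G :: "'a \<Rightarrow> 'a \<Rightarrow> ennreal" and g :: "real \<Rightarrow> ennreal"
    and c cD M0 \<alpha>0 :: real
  assumes kernel: "kernel_family mu"
    and G_borel: "case_prod G \<in> borel_measurable borel"
    and G_lower: "ennreal (1 / c) * g (dist x y) \<le> G x y"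
    and G_upper: "G x y \<le> ennreal c * g (dist x y)"
    and g_antimono: "0 \<le> s \<Longrightarrow> s \<le> t \<Longrightarrow> g t \<le> g s"
    and g_pos: "0 < t \<Longrightarrow> 0 < g t"
    and g_finite: "0 < t \<Longrightarrow> g t < \<top>"
    and g_doubling: "0 < t \<Longrightarrow> g (t / 2) \<le> ennreal cD * g t"
    and g_growth: "0 < t \<Longrightarrow> ennreal M0 * g t \<le> g (\<alpha>0 * t)"
    and c_ge_1: "1 \<le> c" and cD_ge_1: "1 \<le> cD" and M0_ge_1: "1 \<le> M0" and \<alpha>0_pos: "0 < \<alpha>0"
begin

definition g_real :: "real \<Rightarrow> real" where
  "g_real t = enn2real (g t)"

lemma g_eq_ennreal: "0 < t \<Longrightarrow> g t = ennreal (g_real t)"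
  using g_finite unfolding g_real_def by (simp add: less_top)

lemma g_real_pos: "0 < t \<Longrightarrow> 0 < g_real t"
  using g_pos g_finite unfolding g_real_def by (simp add: enn2real_positive_iff)

lemma g_real_antimono: "0 < s \<Longrightarrow> s \<le> t \<Longrightarrow> g_real t \<le> g_real s"
  using g_antimono[of s t] g_eq_ennreal[of s] g_eq_ennreal[of t] g_real_pos[of s] by simp

lemma g_real_doubling: "0 < t \<Longrightarrow> g_real (t / 2) \<le> cD * g_real t"
  using g_doubling[of t] g_eq_ennreal[of t] g_eq_ennreal[of "t / 2"] g_real_pos[of t] cD_ge_1
  by (simp add: ennreal_mult[symmetric])

lemma g_real_growth: "0 < t \<Longrightarrow> M0 * g_real t \<le> g_real (\<alpha>0 * t)"
  using g_growth[of t] g_eq_ennreal[of t] g_eq_ennreal[of "\<alpha>0 * t"] g_real_pos[of t]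
    g_real_pos[of "\<alpha>0 * t"] M0_ge_1 \<alpha>0_pos
  by (simp add: ennreal_mult[symmetric] ennreal_le_iff)

lemma g_real_growth_pow: "0 < t \<Longrightarrow> M0 ^ k * g_real t \<le> g_real (\<alpha>0 ^ k * t)"
proof (induction k)
  case (Suc k)
  have "M0 ^ Suc k * g_real t \<le> M0 * g_real (\<alpha>0 ^ k * t)"
    using Suc M0_ge_1 by (simp add: mult.assoc mult_left_mono)
  also have "\<dots> \<le> g_real (\<alpha>0 ^ Suc k * t)"
    using g_real_growth[of "\<alpha>0 ^ k * t"] Suc.prems \<alpha>0_pos by (simp add: mult.assoc)
  finally show ?case .
qed simp

lemma g_real_le_scaled:
  assumes "K \<le> M0 ^ k" "0 < \<alpha>" "\<alpha> \<le> \<alpha>0 ^ k" "0 < r"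
  shows "K * g_real r \<le> g_real (\<alpha> * r)"
proof -
  have "K * g_real r \<le> M0 ^ k * g_real r"
    using assms(1) g_real_pos[OF assms(4)] by (simp add: mult_right_mono)
  also have "\<dots> \<le> g_real (\<alpha>0 ^ k * r)"
    by (rule g_real_growth_pow[OF assms(4)])
  also have "\<dots> \<le> g_real (\<alpha> * r)"
    using assms(2-4) by (intro g_real_antimono) auto
  finally show ?thesis .
qed

lemma G_quasi_symmetric: "G x y \<le> ennreal (c\<^sup>2) * G y x"
proof -
  have "G x y \<le> ennreal c * g (dist y x)"
    using G_upper by (simp add: dist_commute)
  also have "\<dots> = ennreal (c\<^sup>2) * (ennreal (1 / c) * g (dist y x))"
  proof -
    have "ennreal (c\<^sup>2) * ennreal (1 / c) = ennreal c"
      using c_ge_1 by (simp add: ennreal_mult[symmetric] power2_eq_square)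
    then show ?thesis by (simp add: mult.assoc[symmetric])
  qed
  also have "\<dots> \<le> ennreal (c\<^sup>2) * G y x"
    using G_lower by (rule mult_left_mono) simp
  finally show ?thesis .
qed

lemma Gpot_ge_near:
  assumes \<nu>: "finite_borel \<nu>" "closed B" "emeasure \<nu> (- B) = 0" and B: "B \<subseteq> ball x0 \<rho>"
    and x: "x \<in> ball x0 \<rho>"
  shows "ennreal (g_real (2 * \<rho>) / c) * emeasure \<nu> UNIV \<le> Gpot G \<nu> x"
proof (rule Gpot_ge_mass[OF \<nu>])
  fix z assume "z \<in> B"
  then have "dist x z \<le> 2 * \<rho>"
    using B x dist_triangle[of x z x0] by (auto simp: dist_commute)
  have "0 < \<rho>" using x zero_le_dist[of x0 x] by (simp only: mem_ball)
  have "ennreal (g_real (2 * \<rho>) / c) = ennreal (1 / c) * g (2 * \<rho>)"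
    using \<open>0 < \<rho>\<close> g_eq_ennreal g_real_pos[of "2 * \<rho>"] c_ge_1 by (simp add: ennreal_mult[symmetric])
  also have "\<dots> \<le> ennreal (1 / c) * g (dist x z)"
    using \<open>dist x z \<le> 2 * \<rho>\<close> by (intro mult_left_mono g_antimono) auto
  also have "\<dots> \<le> G x z"
    by (rule G_lower)
  finally show "ennreal (g_real (2 * \<rho>) / c) \<le> G x z" .
qed

lemma Gpot_le_far:
  assumes \<nu>: "finite_borel \<nu>" "closed B" "emeasure \<nu> (- B) = 0" and B: "B \<subseteq> ball x0 \<rho>"
    and r: "0 < r" "2 * \<rho> \<le> r" and y: "r \<le> dist x0 y"
  shows "Gpot G \<nu> y \<le> ennreal (c * g_real (r / 2)) * emeasure \<nu> UNIV"
proof (rule Gpot_le_mass[OF \<nu>])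
  fix z assume "z \<in> B"
  then have "r / 2 \<le> dist y z"
    using B r y dist_triangle[of x0 y z] by (auto simp: dist_commute)
  have "G y z \<le> ennreal c * g (dist y z)"
    by (rule G_upper)
  also have "\<dots> \<le> ennreal c * g (r / 2)"
    using \<open>r / 2 \<le> dist y z\<close> r by (intro mult_left_mono g_antimono) auto
  also have "\<dots> = ennreal (c * g_real (r / 2))"
    using r g_eq_ennreal g_real_pos[of "r / 2"] c_ge_1 by (simp add: ennreal_mult)
  finally show "G y z \<le> ennreal (c * g_real (r / 2))" .
qed

lemma cap_le_mass_if_sweep_le_Gpot:
  assumes A: "closed A" and \<nu>: "finite_borel \<nu>"
    and sweep_le: "\<And>y. emeasure (sweep mu A y) UNIV \<le> Gpot G \<nu> y"
  shows "cap G A \<le> ennreal (c\<^sup>2) * emeasure \<nu> UNIV"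
proof (rule cap_le_mass_if_Gpot_ge_1[OF G_borel G_quasi_symmetric \<nu> A])
  fix y assume "y \<in> A"
  then show "1 \<le> Gpot G \<nu> y"
    using sweep_le[of y] sweep_eq_return[OF kernel A] by simp
qed

lemma mass_le_sweep_near:
  assumes \<nu>: "finite_borel \<nu>" "closed B" "emeasure \<nu> (- B) = 0" and B: "B \<subseteq> ball x0 \<rho>"
    and x: "x \<in> ball x0 \<rho>" and c1: "0 \<le> c1"
    and Gpot_le: "Gpot G \<nu> x \<le> ennreal c1 * emeasure (sweep mu B x) UNIV"
  shows "g_real \<rho> * measure \<nu> UNIV \<le> cD * c * c1 * measure (sweep mu B x) UNIV"
proof -
  define N where "N = measure \<nu> UNIV"
  have N: "emeasure \<nu> UNIV = ennreal N" "0 \<le> N"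
    using \<nu>(1) unfolding N_def finite_borel_def by (simp_all add: finite_measure.emeasure_eq_measure)
  have "0 < \<rho>" using x zero_le_dist[of x0 x] by (simp only: mem_ball)
  have "ennreal (g_real (2 * \<rho>) / c * N) = ennreal (g_real (2 * \<rho>) / c) * emeasure \<nu> UNIV"
    using N \<open>0 < \<rho>\<close> g_real_pos[of "2 * \<rho>"] c_ge_1 by (simp add: ennreal_mult[symmetric])
  also have "\<dots> \<le> Gpot G \<nu> x"
    by (rule Gpot_ge_near[OF \<nu> B x])
  also have "\<dots> \<le> ennreal c1 * emeasure (sweep mu B x) UNIV"
    by (rule Gpot_le)
  also have "\<dots> = ennreal (c1 * measure (sweep mu B x) UNIV)"
    using emeasure_sweep_eq_measure[OF kernel \<nu>(2)] c1 by (simp add: ennreal_mult)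
  finally have "ennreal (g_real (2 * \<rho>) / c * N) \<le> ennreal (c1 * measure (sweep mu B x) UNIV)" .
  then have near: "g_real (2 * \<rho>) / c * N \<le> c1 * measure (sweep mu B x) UNIV"
    using c1 by (simp add: ennreal_le_iff)
  have "g_real \<rho> * N \<le> cD * g_real (2 * \<rho>) * N"
    using g_real_doubling[of "2 * \<rho>"] \<open>0 < \<rho>\<close> N(2) by (simp add: mult_right_mono)
  also have "\<dots> = cD * c * (g_real (2 * \<rho>) / c * N)"
    using c_ge_1 by simp
  also have "\<dots> \<le> cD * c * (c1 * measure (sweep mu B x) UNIV)"
    using near c_ge_1 cD_ge_1 by (intro mult_left_mono) auto
  finally show ?thesis by (simp add: N_def mult.assoc)
qed

lemma sweep_mass_le_hit_plus_far:
  assumes A: "closed A" and \<nu>: "finite_borel \<nu>" "closed B" "emeasure \<nu> (- B) = 0"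
    and B: "B \<subseteq> ball x0 \<rho>" and r: "0 < r" "2 * \<rho> \<le> r"
    and sweep_le: "\<And>y. emeasure (sweep mu A y) UNIV \<le> Gpot G \<nu> y"
  shows "measure (sweep mu A x) UNIV
    \<le> measure (sweep mu (A \<union> - ball x0 r) x) A + c * g_real (r / 2) * measure \<nu> UNIV"
proof -
  define A' where "A' = A \<union> - ball x0 r"
  have A': "closed A'" "A \<subseteq> A'"
    unfolding A'_def using A by auto
  have N: "emeasure \<nu> UNIV = ennreal (measure \<nu> UNIV)"
    using \<nu>(1) unfolding finite_borel_def by (simp add: finite_measure.emeasure_eq_measure)
  have "emeasure (sweep mu A x) UNIV
      \<le> emeasure (sweep mu A' x) A + ennreal (c * g_real (r / 2)) * emeasure \<nu> UNIV"
  proof (rule emeasure_sweep_le_sweep_superset[OF kernel A A'])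
    fix y assume "y \<in> A' - A"
    then have "r \<le> dist x0 y" unfolding A'_def by auto
    then show "emeasure (sweep mu A y) UNIV \<le> ennreal (c * g_real (r / 2)) * emeasure \<nu> UNIV"
      using sweep_le[of y] Gpot_le_far[OF \<nu> B r] by (blast intro: order_trans)
  qed
  then show ?thesis
    using emeasure_sweep_eq_measure[OF kernel A] emeasure_sweep_eq_measure[OF kernel A'(1)] N r
      c_ge_1 g_real_pos[of "r / 2"]
    by (simp add: A'_def ennreal_mult[symmetric] ennreal_plus[symmetric] del: ennreal_plus)
qed

lemma mass_le_sweep_hit_plus:
  assumes c1: "1 \<le> c1" and e: "0 < e"
    and r: "0 < r" "2 * \<rho> \<le> r" and x: "x \<in> ball x0 \<rho>" and A: "closed A"
    and \<nu>: "finite_borel \<nu>" "closed B" "emeasure \<nu> (- B) = 0" and B: "B \<subseteq> ball x0 \<rho>"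
    and sweep_B: "measure (sweep mu B x) UNIV - e < c1 * measure (sweep mu A x) UNIV"
    and sweep_A_le: "\<And>y. emeasure (sweep mu A y) UNIV \<le> Gpot G \<nu> y"
    and Gpot_le: "Gpot G \<nu> x \<le> ennreal c1 * emeasure (sweep mu B x) UNIV"
    and growth: "2 * cD\<^sup>2 * c\<^sup>2 * c1\<^sup>2 * g_real r \<le> g_real \<rho>"
  shows "g_real \<rho> * measure \<nu> UNIV
    \<le> 2 * (cD * c * c1) * c1 * (measure (sweep mu (A \<union> - ball x0 r) x) A + e)"
proof -
  define N where "N = measure \<nu> UNIV"
  have "0 \<le> N"
    by (simp add: N_def)
  \<comment> \<open>the contribution of points outside \<open>U(x0,r)\<close> is at most half of \<open>g(\<rho>) \<parallel>\<nu>\<parallel>\<close>\<close>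
  have "g_real (r / 2) * N \<le> cD * g_real r * N"
    using g_real_doubling[OF r(1)] \<open>0 \<le> N\<close> by (rule mult_right_mono)
  then have "cD * c * c1 * c1 * (c * g_real (r / 2) * N) \<le> cD * c * c1 * c1 * (c * (cD * g_real r * N))"
    using cD_ge_1 c_ge_1 c1 by (intro mult_left_mono) auto
  also have "\<dots> = cD\<^sup>2 * c\<^sup>2 * c1\<^sup>2 * g_real r * N"
    by (simp add: power2_eq_square)
  also have "\<dots> \<le> g_real \<rho> * N / 2"
    using mult_right_mono[OF growth \<open>0 \<le> N\<close>] by simp
  finally show ?thesis
    using mass_le_sweep_near[OF \<nu> B x _ Gpot_le] sweep_B
      sweep_mass_le_hit_plus_far[OF A \<nu> B r sweep_A_le, of x] c1 c_ge_1 cD_ge_1 e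
    by (intro absorb_half_bound[where eB = "measure (sweep mu B x) UNIV"
          and eA = "measure (sweep mu A x) UNIV"]) (auto simp: N_def)
qed

lemma cap_ratio_le_sweep_hit_plus:
  assumes c1: "1 \<le> c1" and c2: "1 \<le> c2" and e: "0 < e"
    and r: "0 < r" "2 * \<rho> \<le> r" and x: "x \<in> ball x0 \<rho>" and A: "closed A"
    and \<nu>: "finite_borel \<nu>" "closed B" "emeasure \<nu> (- B) = 0" and B: "B \<subseteq> ball x0 \<rho>"
    and sweep_B: "measure (sweep mu B x) UNIV - e < c1 * measure (sweep mu A x) UNIV"
    and sweep_A_le: "\<And>y. emeasure (sweep mu A y) UNIV \<le> Gpot G \<nu> y"
    and Gpot_le: "Gpot G \<nu> x \<le> ennreal c1 * emeasure (sweep mu B x) UNIV"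
    and cap_ball: "ennreal (1 / c2) / g \<rho> \<le> cap G (ball x0 \<rho>)"
    and growth: "2 * cD\<^sup>2 * c\<^sup>2 * c1\<^sup>2 * g_real r \<le> g_real \<rho>"
  shows "ennreal (1 / (2 * cD * c^3 * c1^2 * c2)) * (cap G A / cap G (ball x0 \<rho>))
    \<le> emeasure (sweep mu (A \<union> - ball x0 r) x) A + ennreal e"
proof -
  define N where "N = measure \<nu> UNIV"
  define hit where "hit = measure (sweep mu (A \<union> - ball x0 r) x) A"
  have N: "emeasure \<nu> UNIV = ennreal N" "0 \<le> N"
    using \<nu>(1) unfolding N_def finite_borel_def by (simp_all add: finite_measure.emeasure_eq_measure)
  have "0 < \<rho>" using x zero_le_dist[of x0 x] by (simp only: mem_ball)
  have bound: "1 / (2 * cD * c^3 * c1^2 * c2) * (c\<^sup>2 * N * (c2 * g_real \<rho>)) \<le> hit + e"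
    using mass_le_sweep_hit_plus[OF c1 e r x A \<nu> B sweep_B sweep_A_le Gpot_le growth]
      c_ge_1 cD_ge_1 c1 c2
    by (simp add: N_def hit_def field_simps power2_eq_square power3_eq_cube)
  have "cap G A / cap G (ball x0 \<rho>) \<le> ennreal (c\<^sup>2 * N * (c2 * g_real \<rho>))"
  proof (rule ennreal_divide_le_mult)
    show "cap G A \<le> ennreal (c\<^sup>2 * N)"
      using cap_le_mass_if_sweep_le_Gpot[OF A \<nu>(1) sweep_A_le] N by (simp add: ennreal_mult)
    show "ennreal (1 / (c2 * g_real \<rho>)) \<le> cap G (ball x0 \<rho>)"
      using cap_ball g_eq_ennreal[OF \<open>0 < \<rho>\<close>] g_real_pos[OF \<open>0 < \<rho>\<close>] c2
      by (simp add: divide_ennreal)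
  qed (use N(2) c2 g_real_pos[OF \<open>0 < \<rho>\<close>] in auto)
  then have "ennreal (1 / (2 * cD * c^3 * c1^2 * c2)) * (cap G A / cap G (ball x0 \<rho>))
      \<le> ennreal (1 / (2 * cD * c^3 * c1^2 * c2)) * ennreal (c\<^sup>2 * N * (c2 * g_real \<rho>))"
    by (rule mult_left_mono) simp
  also have "\<dots> = ennreal (1 / (2 * cD * c^3 * c1^2 * c2) * (c\<^sup>2 * N * (c2 * g_real \<rho>)))"
    using c_ge_1 cD_ge_1 c1 c2 N(2) g_real_pos[OF \<open>0 < \<rho>\<close>]
    by (intro ennreal_mult[symmetric]) auto
  also have "\<dots> \<le> ennreal (hit + e)"
    using bound by (rule ennreal_leI)
  also have "\<dots> = emeasure (sweep mu (A \<union> - ball x0 r) x) A + ennreal e"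
    using emeasure_sweep_eq_measure[OF kernel closed_Un[OF A closed_Compl[OF open_ball]]] e
    by (simp add: hit_def)
  finally show ?thesis .
qed

lemma sweep_hit_ge_cap_ratio:
  assumes c1: "1 \<le> c1" and c2: "1 \<le> c2"
    and r: "0 < r" "2 * \<rho> \<le> r" and x: "x \<in> ball x0 \<rho>" and A: "closed A"
    and approx: "\<And>e. 0 < e \<Longrightarrow> \<exists>B \<nu>. closed B \<and> B \<subseteq> ball x0 \<rho> \<and>
      finite_borel \<nu> \<and> emeasure \<nu> (- B) = 0 \<and>
      measure (sweep mu B x) UNIV - e < c1 * measure (sweep mu A x) UNIV \<and>
      (\<forall>y. emeasure (sweep mu A y) UNIV \<le> Gpot G \<nu> y \<and>
           Gpot G \<nu> y \<le> ennreal c1 * emeasure (sweep mu B y) UNIV)"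
    and cap_ball: "ennreal (1 / c2) / g \<rho> \<le> cap G (ball x0 \<rho>)"
    and growth: "2 * cD\<^sup>2 * c\<^sup>2 * c1\<^sup>2 * g_real r \<le> g_real \<rho>"
  shows "ennreal (1 / (2 * cD * c^3 * c1^2 * c2)) * (cap G A / cap G (ball x0 \<rho>))
    \<le> emeasure (sweep mu (A \<union> - ball x0 r) x) A"
proof (rule ennreal_le_epsilon)
  fix e :: real assume "0 < e"
  obtain B \<nu> where "closed B" "B \<subseteq> ball x0 \<rho>" "finite_borel \<nu>" "emeasure \<nu> (- B) = 0"
    "measure (sweep mu B x) UNIV - e < c1 * measure (sweep mu A x) UNIV"
    "\<And>y. emeasure (sweep mu A y) UNIV \<le> Gpot G \<nu> y"
    "\<And>y. Gpot G \<nu> y \<le> ennreal c1 * emeasure (sweep mu B y) UNIV"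
    using approx[OF \<open>0 < e\<close>] by (elim exE conjE) (metis that)
  then show "ennreal (1 / (2 * cD * c^3 * c1^2 * c2)) * (cap G A / cap G (ball x0 \<rho>))
      \<le> emeasure (sweep mu (A \<union> - ball x0 r) x) A + ennreal e"
    using c1 c2 r x A cap_ball growth \<open>0 < e\<close> by (intro cap_ratio_le_sweep_hit_plus) auto
qed

end

theorem proposition4p9:
  fixes mu :: "'a::{metric_space,second_countable_topology} set \<Rightarrow> 'a \<Rightarrow> 'a measure"
    and G :: "'a \<Rightarrow> 'a \<Rightarrow> ennreal" and X0 :: "'a set"
    and g :: "real \<Rightarrow> ennreal"
    and c c1 c2 cD M0 \<alpha>0 \<alpha> :: real and k :: nat
  assumes kernel: "kernel_family mu"
    and X0_open: "open X0"
    and G_pos: "\<forall>x y. 0 < G x y"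
    and G_borel: "case_prod G \<in> borel_measurable borel"
    and G1: "c1 \<ge> 1 \<and>
      (\<forall>U x \<delta> A. open U \<and> closure U \<subseteq> X0 \<and> x \<in> U \<and> \<delta> > 0 \<and> closed A \<and> A \<subseteq> U \<longrightarrow>
         (\<exists>B \<nu>. closed B \<and> A \<subseteq> interior B \<and> B \<subseteq> U \<and>
            finite_borel \<nu> \<and> emeasure \<nu> (- B) = 0 \<and>
            measure (sweep mu B x) UNIV - \<delta> < c1 * measure (sweep mu A x) UNIV \<and>
            (\<forall>y. emeasure (sweep mu A y) UNIV \<le> Gpot G \<nu> y \<and>
                 Gpot G \<nu> y \<le> ennreal c1 * emeasure (sweep mu B y) UNIV)))"
    and G2: "(\<forall>s t. 0 \<le> s \<and> s < t \<longrightarrow> g t < g s) \<and> continuous_on {0..} g \<and>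
      (\<forall>t\<ge>0. 0 < g t) \<and>
      c \<ge> 1 \<and> cD \<ge> 1 \<and> M0 \<ge> 1 \<and> 0 < \<alpha>0 \<and> \<alpha>0 < 1 \<and>
      (\<forall>r>0. g (r / 2) \<le> ennreal cD * g r \<and> ennreal M0 * g r \<le> g (\<alpha>0 * r)) \<and>
      (\<forall>x y. ennreal (1 / c) * g (dist x y) \<le> G x y \<and> G x y \<le> ennreal c * g (dist x y))"
    and G3: "c2 \<ge> 1 \<and>
      (\<forall>x\<in>X0. \<forall>r. 0 < r \<and> ereal r < R0 X0 x \<longrightarrow>
         ennreal (1 / c2) / g r \<le> cap G (ball x r))"
    and k_M: "max (2 * cD^2 * c^2 * c1^2) (3 * c * c2) \<le> M0 ^ k"
    and k_alpha: "\<alpha>0 ^ k < 1 / 4"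
    and alpha: "0 < \<alpha>" "\<alpha> \<le> \<alpha>0 ^ k"
  shows "\<forall>x0\<in>X0. \<forall>r. 0 < r \<and> ereal r < R0 X0 x0 \<longrightarrow>
           (\<forall>x\<in>ball x0 (\<alpha> * r). \<forall>A. closed A \<and> A \<subseteq> ball x0 (\<alpha> * r) \<longrightarrow>
              ennreal (1 / (2 * cD * c^3 * c1^2 * c2)) * (cap G A / cap G (ball x0 (\<alpha> * r)))
                \<le> emeasure (sweep mu (A \<union> - ball x0 r) x) A)"
proof -
  have g_dec: "\<And>s t. 0 \<le> s \<Longrightarrow> s < t \<Longrightarrow> g t < g s"
    using G2 by blast
  have c1: "1 \<le> c1" and c2: "1 \<le> c2"
    using G1 G3 by simp_all
  interpret green_setting mu G g c cD M0 \<alpha>0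
  proof
    show "\<And>s t. 0 \<le> s \<Longrightarrow> s \<le> t \<Longrightarrow> g t \<le> g s"
      using g_dec by (metis order.order_iff_strict)
    show "\<And>t. 0 < t \<Longrightarrow> g t < \<top>"
      using g_dec[of 0] top.not_eq_extremum by fastforce
  qed (use kernel G_borel G2 in auto)
  show ?thesis
  proof (intro ballI allI impI, elim conjE)
    fix x0 r x A
    assume x0: "x0 \<in> X0" and r: "0 < r" and rR: "ereal r < R0 X0 x0"
      and x: "x \<in> ball x0 (\<alpha> * r)" and A: "closed A" "A \<subseteq> ball x0 (\<alpha> * r)"
    have \<rho>: "0 < \<alpha> * r" "2 * (\<alpha> * r) \<le> r"
      using alpha k_alpha r by auto
    have growth: "2 * cD\<^sup>2 * c\<^sup>2 * c1\<^sup>2 * g_real r \<le> g_real (\<alpha> * r)"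
      using k_M alpha r by (intro g_real_le_scaled) auto
    have "ereal (\<alpha> * r) < R0 X0 x0"
      using \<rho> by (intro order.strict_trans[OF _ rR]) (simp only: less_ereal.simps)
    then have cap_ball: "ennreal (1 / c2) / g (\<alpha> * r) \<le> cap G (ball x0 (\<alpha> * r))"
      using G3 x0 \<rho>(1) by blast
    show "ennreal (1 / (2 * cD * c^3 * c1^2 * c2)) * (cap G A / cap G (ball x0 (\<alpha> * r)))
        \<le> emeasure (sweep mu (A \<union> - ball x0 r) x) A"
    proof (rule sweep_hit_ge_cap_ratio[OF c1 c2 r \<rho>(2) x A(1) _ cap_ball growth])
      fix e :: real assume "0 < e"
      have "closure (ball x0 (\<alpha> * r)) \<subseteq> X0"
        using \<rho> by (intro closure_ball_subset_if_less_R0[OF rR]) linarith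
      with \<open>0 < e\<close> x A have "open (ball x0 (\<alpha> * r)) \<and> closure (ball x0 (\<alpha> * r)) \<subseteq> X0 \<and>
          x \<in> ball x0 (\<alpha> * r) \<and> e > 0 \<and> closed A \<and> A \<subseteq> ball x0 (\<alpha> * r)"
        by simp
      from G1[THEN conjunct2, THEN spec, THEN spec, THEN spec, THEN spec, THEN mp, OF this]
      show "\<exists>B \<nu>. closed B \<and> B \<subseteq> ball x0 (\<alpha> * r) \<and> finite_borel \<nu> \<and> emeasure \<nu> (- B) = 0 \<and>
          measure (sweep mu B x) UNIV - e < c1 * measure (sweep mu A x) UNIV \<and>
          (\<forall>y. emeasure (sweep mu A y) UNIV \<le> Gpot G \<nu> y \<and>
               Gpot G \<nu> y \<le> ennreal c1 * emeasure (sweep mu B y) UNIV)"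
        by (elim exE conjE) (intro exI conjI)
    qed
  qed
qed

end
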